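(* Let $(X,Y)\sim P_{X,Y}$ be random variables taking values in $\mathcal{X}\times\mathcal{Y}$, where $|\mathcal{X}|=2$ and $\mathcal{Y}$ is a finite (discrete) set. For any natural number $L\geq 2$, there exists a random variable $Z$, jointly distributed with $(X,Y)$, taking values in a set $\mathcal{Z}$ of cardinality $|\mathcal{Z}|=L$, such that the joint distribution of $(X,Z,Y)$ has $(X,Y)$-marginal equal to $P_{X,Y}$, $X-Z-Y$ form a Markov chain in this order, and \[ I(X;Z)-I(X;Y)\leq 128\,L^{-2}. \]
   Context: All logarithms (and hence mutual informations) are to the natural base. *)

theory Defs
  imports "HOL-Probability.Probability_Mass_Function"
begin

definition mutual_info :: "('a \<times> 'b) pmf \<Rightarrow> real" where
  "mutual_info p = (\<Sum>ab\<in>set_pmf p.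
      pmf p ab * ln (pmf p ab / (pmf (map_pmf fst p) (fst ab) * pmf (map_pmf snd p) (snd ab))))"

definition markov_chain :: "('x \<times> 'z \<times> 'y) pmf \<Rightarrow> bool" where
  "markov_chain q \<longleftrightarrow> (\<forall>x z y.
      pmf q (x, z, y) * pmf (map_pmf (\<lambda>(x, z, y). z) q) z =
      pmf (map_pmf (\<lambda>(x, z, y). (x, z)) q) (x, z) * pmf (map_pmf (\<lambda>(x, z, y). (z, y)) q) (z, y))"

end

theory Submission
  imports Defs
begin

(* Disintegrate P as Y followed by the posterior t(Y) = P(X = x0 | Y). Quantize the posterior:
   given Y = y, let Z be a random choice between two neighbouring points k, k + 1 of the grid
   g j = quad_warp (j / m), m = L - 1, weighted so that the mean of g Z is t y, and redraw X
   from Bernoulli(g Z). This keeps the law of (X, Y) and makes X - Z - Y a Markov chain.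
   I(X;Z) - I(X;Y) is then the average over y of the Jensen gap
   lam D(g k || q) + (1 - lam) D(g (k+1) || q) - D(t y || q) of the binary relative entropy D.
   This gap does not depend on q, so it equals its value at q = t y, which is bounded by the
   chi-square quantity (t - g k)(g (k+1) - t) / (t (1 - t)). The warp makes the grid
   quadratically fine near 0 and 1, where 1 / (t (1 - t)) blows up, so the gap is at most
   32 / m^2 <= 128 / L^2. *)

section \<open>Two-point distributions\<close>

definition two_point_pmf :: "'a \<Rightarrow> 'a \<Rightarrow> real \<Rightarrow> 'a pmf" where
  "two_point_pmf a b t = map_pmf (\<lambda>c. if c then a else b) (bernoulli_pmf t)"

lemma pmf_two_point_pmf:
  assumes "0 \<le> t" "t \<le> 1"
  shows "pmf (two_point_pmf a b t) c = t * indicator {a} c + (1 - t) * indicator {b} c"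
  using assms by (simp add: two_point_pmf_def map_pmf_def pmf_bind split: split_indicator)

lemma set_two_point_pmf: "set_pmf (two_point_pmf a b t) \<subseteq> {a, b}"
  by (auto simp: two_point_pmf_def)

lemma expectation_two_point_pmf:
  fixes h :: "'a \<Rightarrow> real"
  assumes "0 \<le> t" "t \<le> 1"
  shows "measure_pmf.expectation (two_point_pmf a b t) h = t * h a + (1 - t) * h b"
  using assms by (simp add: two_point_pmf_def)

lemma expectation_unit_interval:
  fixes M :: "'a pmf" and t :: "'a \<Rightarrow> real"
  assumes "\<And>y. y \<in> set_pmf M \<Longrightarrow> 0 \<le> t y \<and> t y \<le> 1"
  shows "integrable M t" "0 \<le> measure_pmf.expectation M t" "measure_pmf.expectation M t \<le> 1"
proof -
  show int: "integrable M t"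
    by (rule measure_pmf.integrable_const_bound[where B = 1]) (use assms in \<open>auto intro!: AE_pmfI\<close>)
  show "0 \<le> measure_pmf.expectation M t" "measure_pmf.expectation M t \<le> 1"
    using assms int by (auto intro!: integral_nonneg_AE measure_pmf.integral_le_const AE_pmfI)
qed

lemma expectation_unit_interval_extremal:
  fixes M :: "'a pmf" and t :: "'a \<Rightarrow> real"
  assumes "\<And>y. y \<in> set_pmf M \<Longrightarrow> 0 \<le> t y \<and> t y \<le> 1" "y \<in> set_pmf M"
  shows "measure_pmf.expectation M t = 0 \<Longrightarrow> t y = 0"
    and "measure_pmf.expectation M t = 1 \<Longrightarrow> t y = 1"
proof -
  have int: "integrable M t" by (rule expectation_unit_interval(1)) (use assms in auto)
  show "t y = 0" if "measure_pmf.expectation M t = 0"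
    using that assms int by (subst (asm) integral_nonneg_eq_0_iff_AE) (auto simp: AE_measure_pmf_iff)
  show "t y = 1" if "measure_pmf.expectation M t = 1"
  proof -
    have "measure_pmf.expectation M (\<lambda>y. 1 - t y) = 0" using that int by simp
    then show ?thesis
      using assms int by (subst (asm) integral_nonneg_eq_0_iff_AE) (auto simp: AE_measure_pmf_iff)
  qed
qed

lemma bind_two_point_pmf:
  assumes "\<And>y. y \<in> set_pmf M \<Longrightarrow> 0 \<le> t y \<and> t y \<le> 1"
  shows "bind_pmf M (\<lambda>y. two_point_pmf a b (t y)) = two_point_pmf a b (measure_pmf.expectation M t)"
proof (rule pmf_eqI)
  fix c
  have "pmf (bind_pmf M (\<lambda>y. two_point_pmf a b (t y))) c
      = measure_pmf.expectation M (\<lambda>y. t y * indicator {a} c + (1 - t y) * indicator {b} c)"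
    unfolding pmf_bind using assms
    by (intro integral_cong_AE) (auto simp: AE_measure_pmf_iff pmf_two_point_pmf)
  also have "\<dots> = pmf (two_point_pmf a b (measure_pmf.expectation M t)) c"
    using expectation_unit_interval[of M t] assms by (simp add: pmf_two_point_pmf)
  finally show "pmf (bind_pmf M (\<lambda>y. two_point_pmf a b (t y))) c =
      pmf (two_point_pmf a b (measure_pmf.expectation M t)) c" .
qed

section \<open>Drawing Y, then Z, then X\<close>

lemma expectation_bind_pmf:
  fixes h :: "'b \<Rightarrow> real"
  assumes "finite (set_pmf M)" "\<And>x. x \<in> set_pmf M \<Longrightarrow> finite (set_pmf (N x))"
  shows "measure_pmf.expectation (bind_pmf M N) h =
    measure_pmf.expectation M (\<lambda>x. measure_pmf.expectation (N x) h)"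
  using assms
  by (simp add: pmf_expectation_bind[of "set_pmf M"] integral_measure_pmf_real mult.commute)

lemma pmf_bind_single_branch:
  assumes "\<And>x. x \<noteq> a \<Longrightarrow> c \<notin> set_pmf (N x)"
  shows "pmf (bind_pmf M N) c = pmf M a * pmf (N a) c"
proof -
  have "pmf (bind_pmf M N) c = (\<integral>x. pmf (N a) c * indicator {a} x \<partial>measure_pmf M)"
    unfolding pmf_bind using assms
    by (intro Bochner_Integration.integral_cong) (auto simp: set_pmf_iff split: split_indicator)
  then show ?thesis by (simp add: measure_pmf_single)
qed

lemma pmf_bind_map_pair:
  "pmf (bind_pmf M (\<lambda>a. map_pmf (\<lambda>b. (b, a)) (N a))) (b, a) = pmf M a * pmf (N a) b"
proof -
  have "pmf (map_pmf (\<lambda>b. (b, a)) (N a)) (b, a) = pmf (N a) b"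
    by (rule pmf_map_inj') (auto intro: injI)
  then show ?thesis by (subst pmf_bind_single_branch[where a = a]) auto
qed

definition markov_pmf :: "'y pmf \<Rightarrow> ('y \<Rightarrow> 'z pmf) \<Rightarrow> ('z \<Rightarrow> 'x pmf) \<Rightarrow> ('x \<times> 'z \<times> 'y) pmf" where
  "markov_pmf M W R = bind_pmf M (\<lambda>y. bind_pmf (W y) (\<lambda>z. map_pmf (\<lambda>x. (x, z, y)) (R z)))"

lemma pmf_markov_pmf: "pmf (markov_pmf M W R) (x, z, y) = pmf M y * pmf (W y) z * pmf (R z) x"
proof -
  have "pmf (map_pmf (\<lambda>x. (x, z, y)) (R z)) (x, z, y) = pmf (R z) x"
    by (rule pmf_map_inj') (auto intro: injI)
  then show ?thesis unfolding markov_pmf_def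
    by (subst pmf_bind_single_branch[where a = y], force,
        subst pmf_bind_single_branch[where a = z]) auto
qed

lemma set_markov_pmf:
  "set_pmf (markov_pmf M W R) = {(x, z, y). y \<in> set_pmf M \<and> z \<in> set_pmf (W y) \<and> x \<in> set_pmf (R z)}"
  by (auto simp: markov_pmf_def)

lemma map_markov_pmf_zy:
  "map_pmf (\<lambda>(x, z, y). (z, y)) (markov_pmf M W R) = bind_pmf M (\<lambda>y. map_pmf (\<lambda>z. (z, y)) (W y))"
  by (simp add: markov_pmf_def map_bind_pmf map_pmf_comp map_pmf_def[of _ "W _"])

lemma map_markov_pmf_xz:
  "map_pmf (\<lambda>(x, z, y). (x, z)) (markov_pmf M W R) =
    bind_pmf (bind_pmf M W) (\<lambda>z. map_pmf (\<lambda>x. (x, z)) (R z))"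
  by (simp add: markov_pmf_def map_bind_pmf map_pmf_comp bind_assoc_pmf)

lemma map_markov_pmf_xy:
  "map_pmf (\<lambda>(x, z, y). (x, y)) (markov_pmf M W R) =
    bind_pmf M (\<lambda>y. map_pmf (\<lambda>x. (x, y)) (bind_pmf (W y) R))"
  by (simp add: markov_pmf_def map_bind_pmf map_pmf_comp)

lemma map_markov_pmf_z: "map_pmf (\<lambda>(x, z, y). z) (markov_pmf M W R) = bind_pmf M W"
  by (simp add: markov_pmf_def map_bind_pmf map_pmf_comp bind_return_pmf')

lemma markov_chain_markov_pmf: "markov_chain (markov_pmf M W R)"
  unfolding markov_chain_def map_markov_pmf_zy map_markov_pmf_xz map_markov_pmf_z
  by (simp add: pmf_markov_pmf pmf_bind_map_pair)

lemma map_markov_pmf_xy_two_point: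
  assumes "\<And>y z. z \<in> set_pmf (W y) \<Longrightarrow> 0 \<le> g z \<and> g z \<le> 1"
  shows "map_pmf (\<lambda>(x, z, y). (x, y)) (markov_pmf M W (\<lambda>z. two_point_pmf x0 x1 (g z))) =
    bind_pmf M (\<lambda>y. map_pmf (\<lambda>x. (x, y)) (two_point_pmf x0 x1 (measure_pmf.expectation (W y) g)))"
  unfolding map_markov_pmf_xy using assms by (simp add: bind_two_point_pmf)

section \<open>Binary relative entropy\<close>

(* The relative entropy D(Bernoulli t || Bernoulli q). Because ln 0 = 0 and x / 0 = 0, the formula
   also gives the right value at the boundary as long as q = 0 or q = 1 forces t = q. *)
definition binary_kl :: "real \<Rightarrow> real \<Rightarrow> real" where
  "binary_kl t q = t * ln (t / q) + (1 - t) * ln ((1 - t) / (1 - q))"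

lemma binary_kl_self [simp]: "binary_kl p p = 0"
  by (simp add: binary_kl_def)

lemma binary_kl_change_reference:
  assumes "0 \<le> t" "t \<le> 1" "0 < q" "q < 1" "0 < r" "r < 1"
  shows "binary_kl t q = binary_kl t r + t * ln (r / q) + (1 - t) * ln ((1 - r) / (1 - q))"
proof -
  have split: "s * ln (s / c) = s * ln (s / d) + s * ln (d / c)"
    if "0 \<le> s" "0 < c" "0 < d" for s c d :: real
    using that by (cases "s = 0") (auto simp: ln_div algebra_simps)
  show ?thesis
    using split[of t q r] split[of "1 - t" "1 - q" "1 - r"] assms unfolding binary_kl_def by simp
qed

lemma binary_kl_le_chi_square:
  assumes "0 \<le> t" "t \<le> 1" "0 < p" "p < 1"
  shows "binary_kl t p \<le> (t - p)\<^sup>2 / (p * (1 - p))"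
proof -
  have ln_le: "s * ln (s / c) \<le> s * (s / c - 1)" if "0 \<le> s" "0 < c" for s c :: real
    using that by (cases "s = 0") (auto intro!: mult_left_mono ln_le_minus_one)
  have "t * (t / p - 1) + (1 - t) * ((1 - t) / (1 - p) - 1) = (t - p)\<^sup>2 / (p * (1 - p))"
    using assms by (simp add: field_simps power2_eq_square; simp add: algebra_simps)
  then show ?thesis
    using ln_le[of t p] ln_le[of "1 - t" "1 - p"] assms unfolding binary_kl_def by simp
qed

lemma binary_kl_mixture_gap:
  assumes "0 \<le> a" "a \<le> p" "p \<le> b" "b \<le> 1" "a < b" "lam * a + (1 - lam) * b = p"
    and "0 \<le> q" "q \<le> 1" "q = 0 \<longrightarrow> p = 0" "q = 1 \<longrightarrow> p = 1"
  shows "lam * binary_kl a q + (1 - lam) * binary_kl b q - binary_kl p q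
    \<le> (p - a) * (b - p) / (p * (1 - p))"
proof -
  have lam: "lam * (b - a) = b - p" "(1 - lam) * (b - a) = p - a"
    using assms(6) by (simp_all add: algebra_simps)
  consider "p = a" | "p = b" | "a < p" "p < b" using assms by linarith
  then show ?thesis
  proof cases
    case 1
    then have "lam = 1" using lam assms(5) by simp
    then show ?thesis using 1 by simp
  next
    case 2
    then have "lam = 0" using lam assms(5) by simp
    then show ?thesis using 2 by simp
  next
    case 3
    then have p: "0 < p" "p < 1" and q: "0 < q" "q < 1" using assms by auto
    have "0 \<le> lam * (b - a)" "0 \<le> (1 - lam) * (b - a)" using lam 3 by auto
    then have lam01: "0 \<le> lam" "lam \<le> 1" using assms(5) by (auto simp: zero_le_mult_iff)
    have "lam * binary_kl a q + (1 - lam) * binary_kl b q - binary_kl p q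
        = lam * binary_kl a p + (1 - lam) * binary_kl b p
          + (lam * a + (1 - lam) * b - p) * ln (p / q)
          + (lam * (1 - a) + (1 - lam) * (1 - b) - (1 - p)) * ln ((1 - p) / (1 - q))"
    proof -
      have shift: "binary_kl t q = binary_kl t p + t * ln (p / q) + (1 - t) * ln ((1 - p) / (1 - q))"
        if "t \<in> {a, b, p}" for t
        using that assms p q by (intro binary_kl_change_reference) auto
      show ?thesis by (simp add: shift algebra_simps)
    qed
    also have "\<dots> = lam * binary_kl a p + (1 - lam) * binary_kl b p"
      using assms(6) by (simp add: algebra_simps)
    also have "\<dots> \<le> lam * ((a - p)\<^sup>2 / (p * (1 - p))) + (1 - lam) * ((b - p)\<^sup>2 / (p * (1 - p)))"
      using binary_kl_le_chi_square[of a p] binary_kl_le_chi_square[of b p] assms p lam01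
      by (intro add_mono mult_left_mono) auto
    also have "\<dots> = (p - a) * (b - p) / (p * (1 - p))"
    proof -
      have "lam * (a - p)\<^sup>2 + (1 - lam) * (b - p)\<^sup>2 = (p - a) * (b - p)"
        unfolding assms(6)[symmetric] by (simp add: power2_eq_square algebra_simps)
      then show ?thesis by (simp add: add_divide_distrib[symmetric] mult.commute)
    qed
    finally show ?thesis .
  qed
qed

section \<open>Mutual information with a binary first component\<close>

lemma binary_pmf_disintegration:
  fixes P :: "('x \<times> 'y) pmf"
  assumes "x0 \<noteq> x1" "UNIV = {x0, x1}"
  obtains t where "\<And>y. 0 \<le> t y \<and> t y \<le> 1"
    and "P = bind_pmf (map_pmf snd P) (\<lambda>y. map_pmf (\<lambda>x. (x, y)) (two_point_pmf x0 x1 (t y)))"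
proof -
  define t where "t y = pmf P (x0, y) / pmf (map_pmf snd P) y" for y
  have marginal: "pmf (map_pmf snd P) y = pmf P (x0, y) + pmf P (x1, y)" for y
  proof -
    have "pmf (map_pmf snd P) y = measure P {(x0, y), (x1, y)}"
      unfolding pmf_map using assms by (intro arg_cong[where f = "measure P"]) auto
    also have "\<dots> = pmf P (x0, y) + pmf P (x1, y)"
      using assms by (simp add: measure_measure_pmf_finite)
    finally show ?thesis .
  qed
  have t01: "0 \<le> t y \<and> t y \<le> 1" for y
  proof -
    have "pmf P (x0, y) \<le> pmf (map_pmf snd P) y" using marginal[of y] by simp
    then show ?thesis unfolding t_def by (auto simp: divide_le_eq_1)
  qed
  have x0: "pmf P (x0, y) = pmf (map_pmf snd P) y * t y" for y
    using marginal[of y] unfolding t_def by (auto simp: add_nonneg_eq_0_iff)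
  have "P = bind_pmf (map_pmf snd P) (\<lambda>y. map_pmf (\<lambda>x. (x, y)) (two_point_pmf x0 x1 (t y)))"
  proof (rule pmf_eqI)
    fix xy :: "'x \<times> 'y"
    obtain x y where xy: "xy = (x, y)" by fastforce
    have "x = x0 \<or> x = x1" using assms by blast
    then show "pmf P xy = pmf (bind_pmf (map_pmf snd P)
        (\<lambda>y. map_pmf (\<lambda>x. (x, y)) (two_point_pmf x0 x1 (t y)))) xy"
      unfolding xy pmf_bind_map_pair using assms(1) t01[of y] x0[of y] marginal[of y]
      by (auto simp: pmf_two_point_pmf algebra_simps)
  qed
  with t01 that show ?thesis by blast
qed

lemma mutual_info_binary_mixture:
  fixes M :: "'b pmf"
  assumes "x0 \<noteq> x1" "finite (set_pmf M)" "\<And>b. b \<in> set_pmf M \<Longrightarrow> 0 \<le> t b \<and> t b \<le> 1"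
  shows "mutual_info (bind_pmf M (\<lambda>b. map_pmf (\<lambda>x. (x, b)) (two_point_pmf x0 x1 (t b)))) =
    measure_pmf.expectation M (\<lambda>b. binary_kl (t b) (measure_pmf.expectation M t))"
    (is "mutual_info ?p = _")
proof -
  define q where "q = measure_pmf.expectation M t"
  have q: "0 \<le> q" "q \<le> 1"
    using expectation_unit_interval[of M t] assms unfolding q_def by auto
  have snd: "map_pmf snd ?p = M"
    by (simp add: map_bind_pmf map_pmf_comp bind_return_pmf')
  have fst: "map_pmf fst ?p = two_point_pmf x0 x1 q"
    unfolding q_def using assms by (simp add: map_bind_pmf map_pmf_comp bind_two_point_pmf)
  have pmf_p: "pmf ?p (x, b) = pmf M b * pmf (two_point_pmf x0 x1 (t b)) x" for x b
    by (rule pmf_bind_map_pair)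
  have scaled: "(c * s) * ln ((c * s) / (r * c)) = c * (s * ln (s / r))" if "0 \<le> c" for c s r :: real
    using that by (cases "c = 0") auto
  have "mutual_info ?p = (\<Sum>xb\<in>{x0, x1} \<times> set_pmf M.
      pmf ?p xb * ln (pmf ?p xb / (pmf (map_pmf fst ?p) (fst xb) * pmf (map_pmf snd ?p) (snd xb))))"
    unfolding mutual_info_def
  proof (intro sum.mono_neutral_left)
    show "set_pmf ?p \<subseteq> {x0, x1} \<times> set_pmf M"
      using set_two_point_pmf by fastforce
  qed (auto simp: assms(2) pmf_eq_0_set_pmf)
  also have "\<dots> = (\<Sum>b\<in>set_pmf M. \<Sum>x\<in>{x0, x1}.
      pmf ?p (x, b) * ln (pmf ?p (x, b) / (pmf (map_pmf fst ?p) x * pmf (map_pmf snd ?p) b)))"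
    unfolding sum.cartesian_product' fst_conv snd_conv by (rule sum.swap)
  also have "\<dots> = (\<Sum>b\<in>set_pmf M. pmf M b * binary_kl (t b) q)"
  proof (intro sum.cong refl)
    fix b
    assume "b \<in> set_pmf M"
    then have "0 \<le> t b" "t b \<le> 1" using assms(3) by auto
    then show "(\<Sum>x\<in>{x0, x1}. pmf ?p (x, b) *
        ln (pmf ?p (x, b) / (pmf (map_pmf fst ?p) x * pmf (map_pmf snd ?p) b)))
        = pmf M b * binary_kl (t b) q"
      unfolding fst snd pmf_p using assms(1) q
      by (simp add: pmf_two_point_pmf binary_kl_def scaled distrib_left)
  qed
  also have "\<dots> = measure_pmf.expectation M (\<lambda>b. binary_kl (t b) q)"
    using assms by (simp add: integral_measure_pmf_real mult.commute)
  finally show ?thesis unfolding q_def .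
qed

lemma mutual_info_markov_pmf_gap:
  fixes M :: "'y pmf" and W :: "'y \<Rightarrow> 'z pmf" and g :: "'z \<Rightarrow> real"
  assumes "x0 \<noteq> x1" "finite (set_pmf M)" "\<And>y. finite (set_pmf (W y))"
    and "\<And>y z. z \<in> set_pmf (W y) \<Longrightarrow> 0 \<le> g z \<and> g z \<le> 1"
  defines "t \<equiv> \<lambda>y. measure_pmf.expectation (W y) g"
  defines "q \<equiv> measure_pmf.expectation M t"
  shows "mutual_info (map_pmf (\<lambda>(x, z, y). (x, z)) (markov_pmf M W (\<lambda>z. two_point_pmf x0 x1 (g z))))
      - mutual_info (bind_pmf M (\<lambda>y. map_pmf (\<lambda>x. (x, y)) (two_point_pmf x0 x1 (t y))))
    = measure_pmf.expectation M
        (\<lambda>y. measure_pmf.expectation (W y) (\<lambda>z. binary_kl (g z) q) - binary_kl (t y) q)"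
proof -
  have fin: "finite (set_pmf (bind_pmf M W))" using assms(2,3) by simp
  have average: "measure_pmf.expectation (bind_pmf M W) h =
      measure_pmf.expectation M (\<lambda>y. measure_pmf.expectation (W y) h)" for h :: "'z \<Rightarrow> real"
    using assms(2,3) by (rule expectation_bind_pmf)
  have t01: "0 \<le> t y \<and> t y \<le> 1" for y
    unfolding t_def using expectation_unit_interval[of "W y" g] assms(4) by auto
  have "mutual_info (map_pmf (\<lambda>(x, z, y). (x, z)) (markov_pmf M W (\<lambda>z. two_point_pmf x0 x1 (g z))))
      = measure_pmf.expectation M (\<lambda>y. measure_pmf.expectation (W y) (\<lambda>z. binary_kl (g z) q))"
    unfolding map_markov_pmf_xz using assms(1,4) fin
    by (subst mutual_info_binary_mixture) (auto simp: average t_def q_def)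
  moreover have "mutual_info (bind_pmf M (\<lambda>y. map_pmf (\<lambda>x. (x, y)) (two_point_pmf x0 x1 (t y))))
      = measure_pmf.expectation M (\<lambda>y. binary_kl (t y) q)"
    unfolding q_def using assms(1,2) t01 by (rule mutual_info_binary_mixture)
  ultimately show ?thesis using assms(2) by (simp add: integrable_measure_pmf_finite)
qed

lemma mutual_info_markov_pmf_gap_le:
  fixes M :: "'y pmf" and W :: "'y \<Rightarrow> 'z pmf" and g :: "'z \<Rightarrow> real"
  defines "t \<equiv> \<lambda>y. measure_pmf.expectation (W y) g"
  assumes "x0 \<noteq> x1" "finite (set_pmf M)" "\<And>y. finite (set_pmf (W y))"
    and "\<And>y z. z \<in> set_pmf (W y) \<Longrightarrow> 0 \<le> g z \<and> g z \<le> 1"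
    and "\<And>y q. y \<in> set_pmf M \<Longrightarrow> 0 \<le> q \<Longrightarrow> q \<le> 1 \<Longrightarrow>
      (q = 0 \<longrightarrow> t y = 0) \<Longrightarrow> (q = 1 \<longrightarrow> t y = 1) \<Longrightarrow>
      measure_pmf.expectation (W y) (\<lambda>z. binary_kl (g z) q) - binary_kl (t y) q \<le> C"
  shows "mutual_info (map_pmf (\<lambda>(x, z, y). (x, z)) (markov_pmf M W (\<lambda>z. two_point_pmf x0 x1 (g z))))
      - mutual_info (bind_pmf M (\<lambda>y. map_pmf (\<lambda>x. (x, y)) (two_point_pmf x0 x1 (t y)))) \<le> C"
proof -
  define q where "q = measure_pmf.expectation M t"
  have t01: "0 \<le> t y \<and> t y \<le> 1" for y
    unfolding t_def using expectation_unit_interval[of "W y" g] assms(5) by auto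
  then have q: "0 \<le> q" "q \<le> 1" using expectation_unit_interval[of M t] unfolding q_def by auto
  have "measure_pmf.expectation M
      (\<lambda>y. measure_pmf.expectation (W y) (\<lambda>z. binary_kl (g z) q) - binary_kl (t y) q) \<le> C"
  proof (rule measure_pmf.integral_le_const)
    show "integrable M (\<lambda>y. measure_pmf.expectation (W y) (\<lambda>z. binary_kl (g z) q) - binary_kl (t y) q)"
      using assms(3) by (simp add: integrable_measure_pmf_finite)
    show "AE y in M. measure_pmf.expectation (W y) (\<lambda>z. binary_kl (g z) q) - binary_kl (t y) q \<le> C"
    proof (rule AE_pmfI)
      fix y assume "y \<in> set_pmf M"
      moreover from this have "q = 0 \<longrightarrow> t y = 0" "q = 1 \<longrightarrow> t y = 1"
        using expectation_unit_interval_extremal[of M t y] t01 unfolding q_def by auto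
      ultimately show "measure_pmf.expectation (W y) (\<lambda>z. binary_kl (g z) q) - binary_kl (t y) q \<le> C"
        using q assms(6) by blast
    qed
  qed
  then show ?thesis
    using mutual_info_markov_pmf_gap[OF assms(2-5)] unfolding t_def q_def by simp
qed

section \<open>A quadratically warped grid\<close>

definition quad_warp :: "real \<Rightarrow> real" where
  "quad_warp t = (if t \<le> 1/2 then 2 * t\<^sup>2 else 1 - 2 * (1 - t)\<^sup>2)"

lemma quad_warp_one_minus: "quad_warp (1 - t) = 1 - quad_warp t"
  unfolding quad_warp_def by (auto simp: power2_eq_square algebra_simps)

lemma quad_warp_le: "quad_warp t \<le> 2 * t\<^sup>2"
proof -
  have "0 \<le> (2 * t - 1)\<^sup>2" by (rule zero_le_power2)
  then show ?thesis unfolding quad_warp_def by (auto simp: power2_eq_square algebra_simps)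
qed

lemma quad_warp_strict_mono:
  assumes "0 \<le> u" "u < v" "v \<le> 1"
  shows "quad_warp u < quad_warp v"
proof -
  have lower: "quad_warp s < quad_warp t" if "0 \<le> s" "s < t" "t \<le> 1/2" for s t
    using that unfolding quad_warp_def by (auto simp: power2_eq_square intro!: mult_strict_mono)
  have upper: "quad_warp s < quad_warp t" if "1/2 \<le> s" "s < t" "t \<le> 1" for s t
    using lower[of "1 - t" "1 - s"] that by (simp add: quad_warp_one_minus)
  consider "v \<le> 1/2" | "1/2 \<le> u" | "u < 1/2" "1/2 < v" by linarith
  then show ?thesis
  proof cases
    case 3
    then show ?thesis using lower[of u "1/2"] upper[of "1/2" v] assms by linarith
  qed (use assms lower upper in auto)
qed

lemma quad_warp_mono: "0 \<le> u \<Longrightarrow> u \<le> v \<Longrightarrow> v \<le> 1 \<Longrightarrow> quad_warp u \<le> quad_warp v"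
  using quad_warp_strict_mono[of u v] by (cases "u = v") auto

lemma quad_warp_half: "quad_warp (1/2) = 1/2"
  by (simp add: quad_warp_def power2_eq_square)

lemma quad_warp_unit_interval:
  assumes "0 \<le> t" "t \<le> 1"
  shows "0 \<le> quad_warp t" "quad_warp t \<le> 1"
  using quad_warp_mono[of 0 t] quad_warp_mono[of t 1] assms by (auto simp: quad_warp_def)

lemma quad_warp_surj:
  assumes "0 \<le> p" "p \<le> 1"
  obtains u where "0 \<le> u" "u \<le> 1" "quad_warp u = p"
proof (cases "p \<le> 1/2")
  case True
  define s where "s = sqrt (p/2)"
  have "s \<le> 1/2" unfolding s_def using True by (intro real_le_lsqrt) (auto simp: power2_eq_square)
  moreover have "s\<^sup>2 = p/2" unfolding s_def using assms by simp
  moreover have "0 \<le> s" unfolding s_def using assms by simp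
  ultimately show ?thesis using that[of s] by (simp add: quad_warp_def)
next
  case False
  define s where "s = sqrt ((1 - p)/2)"
  have "s < 1/2" unfolding s_def using False by (intro real_less_lsqrt) (auto simp: power2_eq_square)
  moreover have "s\<^sup>2 = (1 - p)/2" unfolding s_def using assms by simp
  moreover have "0 \<le> s" unfolding s_def using assms by simp
  ultimately show ?thesis using that[of "1 - s"] assms by (simp add: quad_warp_def)
qed

lemma quad_warp_bracket_lower_half:
  assumes "0 \<le> t" "t \<le> s" "s \<le> t + d" "t + d \<le> 1" "s \<le> 1/2" "0 < d"
  shows "(quad_warp s - quad_warp t) * (quad_warp (t + d) - quad_warp s) \<le> 16 * d\<^sup>2 * quad_warp s"
proof -
  have t: "quad_warp t = 2 * t\<^sup>2" and s: "quad_warp s = 2 * s\<^sup>2"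
    using assms unfolding quad_warp_def by auto
  have "quad_warp (t + d) \<le> 2 * (t + d)\<^sup>2" by (rule quad_warp_le)
  also have "\<dots> \<le> 2 * (s + d)\<^sup>2" using assms by (simp add: power_mono)
  finally have right: "quad_warp (t + d) - quad_warp s \<le> 4 * s * d + 2 * d\<^sup>2"
    using s by (simp add: power2_eq_square algebra_simps)
  have left: "quad_warp s - quad_warp t \<le> 4 * s * d"
  proof -
    have "quad_warp s - quad_warp t = 2 * (s - t) * (s + t)"
      using s t by (simp add: power2_eq_square algebra_simps)
    also have "\<dots> \<le> 2 * d * (2 * s)" using assms by (intro mult_mono) auto
    finally show ?thesis by (simp add: mult_ac)
  qed
  have nonneg: "0 \<le> quad_warp s - quad_warp t" "0 \<le> quad_warp (t + d) - quad_warp s"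
    using quad_warp_mono[of t s] quad_warp_mono[of s "t + d"] assms by auto
  show ?thesis
  proof (cases "d \<le> s")
    case True
    have "d * d \<le> s * d" using True assms by (intro mult_right_mono) auto
    then have "quad_warp (t + d) - quad_warp s \<le> 6 * s * d" using right by (simp add: power2_eq_square)
    then have "(quad_warp s - quad_warp t) * (quad_warp (t + d) - quad_warp s)
        \<le> (4 * s * d) * (6 * s * d)"
      using left nonneg assms by (intro mult_mono) auto
    also have "\<dots> = 12 * d\<^sup>2 * quad_warp s" using s by (simp add: power2_eq_square)
    also have "\<dots> \<le> 16 * d\<^sup>2 * quad_warp s" using s by simp
    finally show ?thesis .
  next
    case False
    have "4 * s * d \<le> 4 * d * d" using False assms by (intro mult_mono) auto
    then have "(quad_warp s - quad_warp t) * (quad_warp (t + d) - quad_warp s)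
        \<le> quad_warp s * (6 * d\<^sup>2)"
      using right nonneg s t by (intro mult_mono) (auto simp: power2_eq_square)
    also have "\<dots> \<le> 16 * d\<^sup>2 * quad_warp s" using s by simp
    finally show ?thesis .
  qed
qed

lemma quad_warp_bracket:
  assumes "0 \<le> t" "t \<le> u" "u \<le> t + d" "t + d \<le> 1" "0 < d"
  shows "(quad_warp u - quad_warp t) * (quad_warp (t + d) - quad_warp u)
    \<le> 32 * d\<^sup>2 * (quad_warp u * (1 - quad_warp u))"
proof (cases "u \<le> 1/2")
  case True
  have "quad_warp u \<le> quad_warp (1/2)" using True assms by (intro quad_warp_mono) auto
  then have "1 \<le> 2 * (1 - quad_warp u)" by (simp add: quad_warp_half)
  moreover have "0 \<le> quad_warp u" using assms quad_warp_unit_interval by simp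
  ultimately have "16 * d\<^sup>2 * quad_warp u \<le> 16 * d\<^sup>2 * quad_warp u * (2 * (1 - quad_warp u))"
    using mult_left_mono[of 1 "2 * (1 - quad_warp u)" "16 * d\<^sup>2 * quad_warp u"] by simp
  then show ?thesis
    using quad_warp_bracket_lower_half[of t u d] True assms by (simp add: algebra_simps)
next
  case False
  have "quad_warp (1/2) \<le> quad_warp u" using False assms by (intro quad_warp_mono) auto
  then have "1 \<le> 2 * quad_warp u" by (simp add: quad_warp_half)
  moreover have "quad_warp u \<le> 1" using assms quad_warp_unit_interval by simp
  ultimately have "16 * d\<^sup>2 * (1 - quad_warp u) \<le> 16 * d\<^sup>2 * (1 - quad_warp u) * (2 * quad_warp u)"
    using mult_left_mono[of 1 "2 * quad_warp u" "16 * d\<^sup>2 * (1 - quad_warp u)"] by simp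
  moreover have "(quad_warp u - quad_warp t) * (quad_warp (t + d) - quad_warp u)
      \<le> 16 * d\<^sup>2 * (1 - quad_warp u)"
    using quad_warp_bracket_lower_half[of "1 - (t + d)" "1 - u" d] False assms
    by (simp add: quad_warp_one_minus algebra_simps)
  ultimately show ?thesis by (simp add: algebra_simps)
qed

lemma uniform_grid_bracket:
  assumes "0 < m" "0 \<le> u" "u \<le> 1"
  obtains k :: nat where "k < m" "real k / m \<le> u" "u \<le> real (Suc k) / m"
proof -
  define k where "k = min (nat \<lfloor>m * u\<rfloor>) (m - 1)"
  have "real k \<le> real (nat \<lfloor>m * u\<rfloor>)" unfolding k_def by simp
  also have "\<dots> \<le> m * u" using assms by (simp add: of_nat_nat)
  finally have lower: "real k \<le> m * u" .
  have upper: "m * u \<le> real (Suc k)"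
  proof (cases "nat \<lfloor>m * u\<rfloor> \<le> m - 1")
    case True
    then show ?thesis using assms unfolding k_def by (simp add: min_def) linarith
  next
    case False
    then have "real m \<le> real (nat \<lfloor>m * u\<rfloor>)" by simp
    also have "\<dots> \<le> m * u" using assms by (simp add: of_nat_nat)
    finally show ?thesis using False assms unfolding k_def by (simp add: min_def of_nat_diff)
  qed
  have "k < m" using assms unfolding k_def by auto
  with lower upper show ?thesis using that assms by (simp add: field_simps)
qed

lemma quad_warp_grid_bracket:
  assumes "0 < m" "0 \<le> p" "p \<le> 1"
  obtains k :: nat where "k < m" "quad_warp (k / m) \<le> p" "p \<le> quad_warp (Suc k / m)"
    and "quad_warp (k / m) < quad_warp (Suc k / m)"
    and "(p - quad_warp (k / m)) * (quad_warp (Suc k / m) - p) / (p * (1 - p)) \<le> 32 / (real m)\<^sup>2"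
proof -
  obtain u where u: "0 \<le> u" "u \<le> 1" "quad_warp u = p" using quad_warp_surj assms(2,3) .
  obtain k where k: "k < m" "real k / m \<le> u" "u \<le> real (Suc k) / m"
    using uniform_grid_bracket assms(1) u(1,2) .
  define d where "d = 1 / real m"
  have next_point: "real (Suc k) / m = k / m + d" unfolding d_def by (simp add: add_divide_distrib)
  have "real (Suc k) / m \<le> 1" using k(1) by simp
  then have d: "0 < d" "k / m + d \<le> 1" using assms(1) unfolding next_point by (auto simp: d_def)
  have "(p - quad_warp (k / m)) * (quad_warp (k / m + d) - p) \<le> 32 * d\<^sup>2 * (p * (1 - p))"
    using quad_warp_bracket[of "k / m" u d] k d u next_point by simp
  then have ratio: "(p - quad_warp (k / m)) * (quad_warp (k / m + d) - p) / (p * (1 - p)) \<le> 32 * d\<^sup>2"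
    using assms by (cases "p * (1 - p) = 0") (auto simp: divide_le_eq mult_pos_pos)
  show ?thesis
  proof (rule that)
    show "quad_warp (k / m) \<le> p" "p \<le> quad_warp (Suc k / m)"
      using quad_warp_mono[of "k / m" u] quad_warp_mono[of u "k / m + d"] k d u next_point by auto
    show "quad_warp (k / m) < quad_warp (Suc k / m)"
      using quad_warp_strict_mono[of "k / m" "k / m + d"] d next_point by simp
    show "(p - quad_warp (k / m)) * (quad_warp (Suc k / m) - p) / (p * (1 - p)) \<le> 32 / (real m)\<^sup>2"
      using ratio next_point unfolding d_def by (simp add: power_divide)
  qed (rule k(1))
qed

definition grid_quantizer :: "nat \<Rightarrow> real \<Rightarrow> nat pmf \<Rightarrow> bool" where
  "grid_quantizer m p w \<longleftrightarrow> set_pmf w \<subseteq> {..m} \<and>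
     measure_pmf.expectation w (\<lambda>z. quad_warp (z / m)) = p \<and>
     (\<forall>q. 0 \<le> q \<and> q \<le> 1 \<and> (q = 0 \<longrightarrow> p = 0) \<and> (q = 1 \<longrightarrow> p = 1) \<longrightarrow>
        measure_pmf.expectation w (\<lambda>z. binary_kl (quad_warp (z / m)) q) - binary_kl p q
          \<le> 32 / (real m)\<^sup>2)"

lemma grid_quantizer_exists:
  assumes "0 < m" "0 \<le> p" "p \<le> 1"
  shows "\<exists>w. grid_quantizer m p w"
proof -
  obtain k where k: "k < m" "quad_warp (k / m) \<le> p" "p \<le> quad_warp (Suc k / m)"
    "quad_warp (k / m) < quad_warp (Suc k / m)"
    "(p - quad_warp (k / m)) * (quad_warp (Suc k / m) - p) / (p * (1 - p)) \<le> 32 / (real m)\<^sup>2"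
    using quad_warp_grid_bracket assms .
  define a where "a = quad_warp (k / m)"
  define b where "b = quad_warp (Suc k / m)"
  define lam where "lam = (b - p) / (b - a)"
  have ab: "0 \<le> a" "b \<le> 1"
    unfolding a_def b_def using k(1) assms(1) quad_warp_unit_interval by auto
  have "a \<le> p" "p \<le> b" "a < b" using k(2-4) unfolding a_def b_def by auto
  then have "lam * (b - a) = b - p" "0 \<le> lam" "lam \<le> 1"
    unfolding lam_def by (auto simp: divide_le_eq_1)
  then have lam: "0 \<le> lam" "lam \<le> 1" "lam * a + (1 - lam) * b = p" by (auto simp: algebra_simps)
  define w where "w = two_point_pmf k (Suc k) lam"
  have expectation_w:
    "measure_pmf.expectation w (\<lambda>z. h (quad_warp (z / m))) = lam * h a + (1 - lam) * h b"
    for h :: "real \<Rightarrow> real"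
    unfolding w_def a_def b_def using lam by (simp add: expectation_two_point_pmf)
  have "measure_pmf.expectation w (\<lambda>z. binary_kl (quad_warp (z / m)) q) - binary_kl p q
      \<le> 32 / (real m)\<^sup>2"
    if "0 \<le> q" "q \<le> 1" "q = 0 \<longrightarrow> p = 0" "q = 1 \<longrightarrow> p = 1" for q
  proof -
    have "lam * binary_kl a q + (1 - lam) * binary_kl b q - binary_kl p q
        \<le> (p - a) * (b - p) / (p * (1 - p))"
      using that k(2-4) ab lam unfolding a_def[symmetric] b_def[symmetric]
      by (intro binary_kl_mixture_gap) auto
    then show ?thesis using expectation_w[of "\<lambda>x. binary_kl x q"] k(5) unfolding a_def b_def by simp
  qed
  moreover have "set_pmf w \<subseteq> {..m}" using set_two_point_pmf k(1) unfolding w_def by fastforce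
  moreover have "measure_pmf.expectation w (\<lambda>z. quad_warp (z / m)) = p"
    using expectation_w[of "\<lambda>x. x"] lam by simp
  ultimately show ?thesis unfolding grid_quantizer_def by blast
qed

lemma quad_warp_channel:
  fixes M :: "'y pmf" and t :: "'y \<Rightarrow> real"
  assumes "x0 \<noteq> x1" "finite (set_pmf M)" "0 < m" "\<And>y. 0 \<le> t y \<and> t y \<le> 1"
  defines "R \<equiv> \<lambda>z. two_point_pmf x0 x1 (quad_warp (z / m))"
    and "P \<equiv> bind_pmf M (\<lambda>y. map_pmf (\<lambda>x. (x, y)) (two_point_pmf x0 x1 (t y)))"
  obtains W :: "'y \<Rightarrow> nat pmf" where "\<And>y. set_pmf (W y) \<subseteq> {..m}"
    and "map_pmf (\<lambda>(x, z, y). (x, y)) (markov_pmf M W R) = P"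
    and "mutual_info (map_pmf (\<lambda>(x, z, y). (x, z)) (markov_pmf M W R)) - mutual_info P
      \<le> 32 / (real m)\<^sup>2"
proof -
  have "\<forall>y. \<exists>w. grid_quantizer m (t y) w" using grid_quantizer_exists assms(3,4) by blast
  then obtain W where W: "\<And>y. grid_quantizer m (t y) (W y)" by (auto dest!: choice)
  define g where "g z = quad_warp (z / m)" for z :: nat
  have support: "set_pmf (W y) \<subseteq> {..m}" and mean: "measure_pmf.expectation (W y) g = t y" for y
    using W unfolding grid_quantizer_def g_def by auto
  have gap: "measure_pmf.expectation (W y) (\<lambda>z. binary_kl (g z) q) - binary_kl (t y) q
      \<le> 32 / (real m)\<^sup>2"
    if "0 \<le> q" "q \<le> 1" "q = 0 \<longrightarrow> t y = 0" "q = 1 \<longrightarrow> t y = 1" for y q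
    using W[of y] that unfolding grid_quantizer_def g_def by blast
  have g01: "0 \<le> g z \<and> g z \<le> 1" if "z \<in> set_pmf (W y)" for y z
  proof -
    have "real z / m \<le> 1" using support that assms(3) by auto
    then show ?thesis unfolding g_def using quad_warp_unit_interval by simp
  qed
  have fin: "finite (set_pmf (W y))" for y using support by (rule finite_subset) simp
  show ?thesis
  proof (rule that[OF support])
    show "map_pmf (\<lambda>(x, z, y). (x, y)) (markov_pmf M W R) = P"
    proof -
      have "map_pmf (\<lambda>(x, z, y). (x, y)) (markov_pmf M W (\<lambda>z. two_point_pmf x0 x1 (g z))) =
          bind_pmf M (\<lambda>y. map_pmf (\<lambda>x. (x, y))
            (two_point_pmf x0 x1 (measure_pmf.expectation (W y) g)))"
        by (rule map_markov_pmf_xy_two_point) (rule g01)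
      then show ?thesis unfolding R_def P_def g_def mean .
    qed
    have "mutual_info (map_pmf (\<lambda>(x, z, y). (x, z)) (markov_pmf M W (\<lambda>z. two_point_pmf x0 x1 (g z))))
        - mutual_info (bind_pmf M (\<lambda>y. map_pmf (\<lambda>x. (x, y))
            (two_point_pmf x0 x1 (measure_pmf.expectation (W y) g)))) \<le> 32 / (real m)\<^sup>2"
      using assms(1,2) fin g01 gap by (intro mutual_info_markov_pmf_gap_le) (simp_all add: mean)
    then show "mutual_info (map_pmf (\<lambda>(x, z, y). (x, z)) (markov_pmf M W R)) - mutual_info P
        \<le> 32 / (real m)\<^sup>2"
      unfolding R_def P_def g_def mean .
  qed
qed

theorem theorem1:
  fixes P :: "('x::finite \<times> 'y::finite) pmf" and L :: nat
  assumes "CARD('x) = 2" and "L \<ge> 2"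
  shows "\<exists>Q :: ('x \<times> nat \<times> 'y) pmf.
           set_pmf Q \<subseteq> UNIV \<times> {..<L} \<times> UNIV \<and>
           map_pmf (\<lambda>(x, z, y). (x, y)) Q = P \<and>
           markov_chain Q \<and>
           mutual_info (map_pmf (\<lambda>(x, z, y). (x, z)) Q) - mutual_info P \<le> 128 / (real L)\<^sup>2"
proof -
  obtain x0 x1 :: 'x where x01: "x0 \<noteq> x1" and UX: "UNIV = {x0, x1}"
    using assms(1) unfolding card_2_iff by blast
  define m where "m = L - 1"
  have m: "0 < m" "real L \<le> 2 * real m" using assms(2) unfolding m_def by auto
  obtain t where t01: "\<And>y. 0 \<le> t y \<and> t y \<le> 1"
    and P: "P = bind_pmf (map_pmf snd P) (\<lambda>y. map_pmf (\<lambda>x. (x, y)) (two_point_pmf x0 x1 (t y)))"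
    using binary_pmf_disintegration[OF x01 UX] by blast
  define R where "R z = two_point_pmf x0 x1 (quad_warp (z / m))" for z :: nat
  obtain W where support: "\<And>y. set_pmf (W y) \<subseteq> {..m}"
    and marginal: "map_pmf (\<lambda>(x, z, y). (x, y)) (markov_pmf (map_pmf snd P) W R) = P"
    and gap: "mutual_info (map_pmf (\<lambda>(x, z, y). (x, z)) (markov_pmf (map_pmf snd P) W R)) - mutual_info P
      \<le> 32 / (real m)\<^sup>2"
    using quad_warp_channel[where M = "map_pmf snd P" and t = t, OF x01 _ m(1) t01]
    unfolding R_def P[symmetric] by auto
  have "32 / (real m)\<^sup>2 \<le> 128 / (real L)\<^sup>2"
  proof -
    have "(real L)\<^sup>2 \<le> (2 * real m)\<^sup>2" using m(2) by (intro power_mono) auto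
    then have "128 / (2 * real m)\<^sup>2 \<le> 128 / (real L)\<^sup>2"
      using m(1) assms(2) by (intro divide_left_mono) auto
    then show ?thesis by (simp add: power_mult_distrib)
  qed
  moreover have "set_pmf (markov_pmf (map_pmf snd P) W R) \<subseteq> UNIV \<times> {..<L} \<times> UNIV"
    using support m(1) unfolding set_markov_pmf m_def by fastforce
  ultimately show ?thesis using marginal gap markov_chain_markov_pmf by fastforce
qed

end
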